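(* Call-by-value coupled logical bisimilarity coincides with the contextual equivalences: $(\approx^v_1,\approx^v_2)=(\simeq^v,\cong^v)$. In particular $(\simeq^v,\cong^v)$ is itself a call-by-value coupled logical bisimulation, and $\approx^v_1=\simeq^v=\cong^v=\approx^v_2$.
   Context: $\Lambda^\bullet$ is the set of closed $\lambda$-terms; values are closed abstractions. Call-by-value reduction on closed terms: $MN\longrightarrow MN'$ if $N\longrightarrow N'$; $MV\longrightarrow M'V$ if $M\longrightarrow M'$ and $V$ is a value; $(\lambda x.P)V\longrightarrow P[V/x]$ if $V$ is a value; $\Longrightarrow$ is the reflexive transitive closure; $M{\Downarrow}$ means $M\Longrightarrow V$ for some value $V$. Contexts are generated by $C::=x\mid[\cdot]\mid C\,C\mid\lambda x.C$, possibly with several holes numbered left to right; $C[\widetilde M]$ fills the $i$-th hole with $M_i$; $C[M]$ fills every hole with $M$. For $\mathcal{R}\subseteq\Lambda^\bullet\times\Lambda^\bullet$, $\mathcal{R}^\star=\{(C[\widetilde M],C[\widetilde N]) : C\text{ a context},\ M_i\,\mathcal{R}\,N_i\ \forall i,\ C[\widetilde M],C[\widetilde N]\in\Lambda^\bullet\}$. $M\simeq^v N$ iff for all contexts $C$ with $C[M],C[N]$ closed, $C[M]{\Downarrow}\iff C[N]{\Downarrow}$. Call-by-value evaluation contexts: $\mathcal{E}::=[\cdot]\mid M\,\mathcal{E}\mid\mathcal{E}\,V$ ($M\in\Lambda^\bullet$, $V$ a value); $M\cong^v N$ iff for all $\mathcal{E}$, $\mathcal{E}[M]{\Downarrow}\iff\mathcal{E}[N]{\Downarrow}$.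 A coupled relation is a pair $(\mathcal{R}_1,\mathcal{R}_2)$ of relations on $\Lambda^\bullet$ with $\mathcal{R}_1\subseteq\mathcal{R}_2$. It is a call-by-value coupled logical bisimulation if whenever $M\,\mathcal{R}_2\,N$: (1) if $M\longrightarrow M'$ then there is $N'$ with $N\Longrightarrow N'$ and $M'\,\mathcal{R}_2\,N'$; (2) if $M=\lambda x.M'$ then $N\Longrightarrow\lambda x.N'$ for some $N'$, $\lambda x.M'\,\mathcal{R}_1\,\lambda x.N'$, and for all values $P,Q$ with $P\,\mathcal{R}_1^\star\,Q$, $M'[P/x]\,\mathcal{R}_2\,N'[Q/x]$; (3) the converses of (1),(2) with $M$ and $N$ exchanged. $(\approx^v_1,\approx^v_2)$ is the componentwise union of all call-by-value coupled logical bisimulations. *)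

theory Defs
  imports Main
begin

datatype trm = Var nat | App trm trm | Lam trm

fun closedn :: "nat \<Rightarrow> trm \<Rightarrow> bool" where
  "closedn k (Var i) = (i < k)"
| "closedn k (App M N) = (closedn k M \<and> closedn k N)"
| "closedn k (Lam M) = closedn (Suc k) M"

definition closed :: "trm \<Rightarrow> bool" where
  "closed M = closedn 0 M"

text \<open>Substitution of a closed term P for index k (no lifting needed as P is closed).\<close>
fun subst :: "trm \<Rightarrow> nat \<Rightarrow> trm \<Rightarrow> trm" where
  "subst (Var i) k P = (if i < k then Var i else if i = k then P else Var (i - 1))"
| "subst (App M N) k P = App (subst M k P) (subst N k P)"
| "subst (Lam M) k P = Lam (subst M (Suc k) P)"

definition is_value :: "trm \<Rightarrow> bool" where
  "is_value M = (\<exists>P. M = Lam P)"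

inductive red :: "trm \<Rightarrow> trm \<Rightarrow> bool" where
  appR: "red N N' \<Longrightarrow> red (App M N) (App M N')"
| appL: "red M M' \<Longrightarrow> is_value V \<Longrightarrow> red (App M V) (App M' V)"
| beta: "is_value V \<Longrightarrow> red (App (Lam P) V) (subst P 0 V)"

abbreviation reds :: "trm \<Rightarrow> trm \<Rightarrow> bool" where
  "reds \<equiv> red\<^sup>*\<^sup>*"

definition conv :: "trm \<Rightarrow> bool" where
  "conv M = (\<exists>V. reds M V \<and> is_value V)"

datatype ctx = CVar nat | CHole | CApp ctx ctx | CLam ctx

fun nholes :: "ctx \<Rightarrow> nat" where
  "nholes (CVar i) = 0"
| "nholes CHole = 1"
| "nholes (CApp C D) = nholes C + nholes D"
| "nholes (CLam C) = nholes C"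

text \<open>Fill the holes, numbered left to right, with the terms of the list.\<close>
fun fill :: "ctx \<Rightarrow> trm list \<Rightarrow> trm" where
  "fill (CVar i) Ms = Var i"
| "fill CHole Ms = hd Ms"
| "fill (CApp C D) Ms = App (fill C (take (nholes C) Ms)) (fill D (drop (nholes C) Ms))"
| "fill (CLam C) Ms = Lam (fill C Ms)"

definition fill_all :: "ctx \<Rightarrow> trm \<Rightarrow> trm" where
  "fill_all C M = fill C (replicate (nholes C) M)"

definition closed_rel :: "(trm \<times> trm) set" where
  "closed_rel = {(M, N). closed M \<and> closed N}"

definition ctx_closure :: "(trm \<times> trm) set \<Rightarrow> (trm \<times> trm) set" where
  "ctx_closure R = {(fill C Ms, fill C Ns) | C Ms Ns.
      length Ms = nholes C \<and> length Ns = nholes C \<and>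
      (\<forall>i < nholes C. (Ms ! i, Ns ! i) \<in> R) \<and>
      closed (fill C Ms) \<and> closed (fill C Ns)}"

definition ctx_equiv :: "(trm \<times> trm) set" where
  "ctx_equiv = {(M, N). closed M \<and> closed N \<and>
     (\<forall>C. closed (fill_all C M) \<and> closed (fill_all C N) \<longrightarrow>
          (conv (fill_all C M) \<longleftrightarrow> conv (fill_all C N)))}"

text \<open>Call-by-value evaluation contexts E ::= [.] | M E | E V, M closed, V a closed value.\<close>
datatype ectx = EHole | EArg trm ectx | EFun ectx trm

fun wf_ectx :: "ectx \<Rightarrow> bool" where
  "wf_ectx EHole = True"
| "wf_ectx (EArg M E) = (closed M \<and> wf_ectx E)"
| "wf_ectx (EFun E V) = (wf_ectx E \<and> closed V \<and> is_value V)"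

fun efill :: "ectx \<Rightarrow> trm \<Rightarrow> trm" where
  "efill EHole M = M"
| "efill (EArg N E) M = App N (efill E M)"
| "efill (EFun E V) M = App (efill E M) V"

definition ectx_equiv :: "(trm \<times> trm) set" where
  "ectx_equiv = {(M, N). closed M \<and> closed N \<and>
     (\<forall>E. wf_ectx E \<longrightarrow> (conv (efill E M) \<longleftrightarrow> conv (efill E N)))}"

text \<open>Clauses (1) and (2) for one direction.\<close>
definition clb_progress :: "(trm \<times> trm) set \<Rightarrow> (trm \<times> trm) set \<Rightarrow> bool" where
  "clb_progress R1 R2 = (\<forall>M N. (M, N) \<in> R2 \<longrightarrow>
     (\<forall>M'. red M M' \<longrightarrow> (\<exists>N'. reds N N' \<and> (M', N') \<in> R2)) \<and>
     (\<forall>M'. M = Lam M' \<longrightarrow> (\<exists>N'. reds N (Lam N') \<and> (Lam M', Lam N') \<in> R1 \<and>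
        (\<forall>P Q. is_value P \<and> is_value Q \<and> (P, Q) \<in> ctx_closure R1 \<longrightarrow>
             (subst M' 0 P, subst N' 0 Q) \<in> R2))))"

definition cbv_clb :: "(trm \<times> trm) set \<Rightarrow> (trm \<times> trm) set \<Rightarrow> bool" where
  "cbv_clb R1 R2 = (R1 \<subseteq> R2 \<and> R2 \<subseteq> closed_rel \<and>
     clb_progress R1 R2 \<and> clb_progress (R1\<inverse>) (R2\<inverse>))"

definition bisim1 :: "(trm \<times> trm) set" where
  "bisim1 = \<Union> {R1. \<exists>R2. cbv_clb R1 R2}"

definition bisim2 :: "(trm \<times> trm) set" where
  "bisim2 = \<Union> {R2. \<exists>R1. cbv_clb R1 R2}"

end

theory Submission
  imports Defs
begin

(* The proof runs on a big-step characterisation of convergence and has three parts.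
   (1) Howe's method.  The Howe relation of the evaluation-context equivalence
       ectx_equiv is a substitutive precongruence that is preserved by evaluation;
       hence ectx_equiv is a congruence, so it coincides with the full contextual
       equivalence ctx_equiv (the converse inclusion holds because every evaluation
       context is a context).
   (2) Soundness.  For a coupled logical bisimulation (R1, R2), the closure of R2
       under applications and of R1 under all contexts (below abstractions) is again
       preserved by evaluation; hence R2 \<subseteq> ectx_equiv, and R1 \<subseteq> R2.
   (3) Completeness.  Using the Howe relation once more, (ctx_equiv, ectx_equiv) is
       itself a coupled logical bisimulation. *)

lemma closedn_mono: "closedn k M \<Longrightarrow> k \<le> m \<Longrightarrow> closedn m M"
  by (induction M arbitrary: k m) auto

lemma closed_closedn: "closed M \<Longrightarrow> closedn k M"
  unfolding closed_def using closedn_mono by blast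

lemma subst_closedn_id: "closedn k M \<Longrightarrow> subst M k P = M"
  by (induction M arbitrary: k) auto

lemma subst_closed_id: "closed M \<Longrightarrow> subst M k P = M"
  using subst_closedn_id closed_closedn by blast

lemma closedn_subst:
  "closedn (Suc n) B \<Longrightarrow> closed V \<Longrightarrow> k \<le> n \<Longrightarrow> closedn n (subst B k V)"
proof (induction B arbitrary: n k)
  case (Var i)
  have "closedn n V" using Var(2) closed_closedn by blast
  then show ?case using Var by (cases "i < k"; cases "i = k") auto
qed auto

lemma closed_subst: "closed (Lam B) \<Longrightarrow> closed V \<Longrightarrow> closed (subst B 0 V)"
  unfolding closed_def using closedn_subst[of 0 B V 0] by (simp add: closed_def)

lemma red_Lam: "red (Lam P) X \<Longrightarrow> False"
  by (cases rule: red.cases) auto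

lemma value_nored: "is_value V \<Longrightarrow> \<not> red V X"
  using red_Lam by (auto simp: is_value_def)

lemma red_det: "red M N1 \<Longrightarrow> red M N2 \<Longrightarrow> N1 = N2"
proof (induction arbitrary: N2 rule: red.induct)
  case (appR N N' M)
  from appR.prems show ?case
    by (cases rule: red.cases) (use appR value_nored in blast)+
next
  case (appL M M' V)
  from appL.prems show ?case
    by (cases rule: red.cases) (use appL value_nored red_Lam in blast)+
next
  case (beta V P)
  from beta.prems show ?case
    by (cases rule: red.cases) (use beta value_nored red_Lam in auto)
qed

lemma red_closed: "red M M' \<Longrightarrow> closed M \<Longrightarrow> closed M'"
  by (induction rule: red.induct) (auto simp: closed_def intro: closed_subst[unfolded closed_def])

lemma reds_closed: "reds M M' \<Longrightarrow> closed M \<Longrightarrow> closed M'"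
  by (induction rule: rtranclp_induct) (auto intro: red_closed)

lemma reds_value_eq: "reds V X \<Longrightarrow> is_value V \<Longrightarrow> X = V"
  by (induction rule: converse_rtranclp_induct) (auto dest: value_nored)

lemma reds_appR: "reds N N' \<Longrightarrow> reds (App M N) (App M N')"
  by (induction rule: rtranclp_induct) (auto intro: rtranclp.rtrancl_into_rtrancl red.appR)

lemma reds_appL: "reds M M' \<Longrightarrow> is_value V \<Longrightarrow> reds (App M V) (App M' V)"
  by (induction rule: rtranclp_induct) (auto intro: rtranclp.rtrancl_into_rtrancl red.appL)

text \<open>Convergence is invariant under reduction (by determinism).\<close>
lemma conv_red: assumes r: "red X X'" shows "conv X \<longleftrightarrow> conv X'"
proof
  assume "conv X'" then show "conv X" unfolding conv_def
    using converse_rtranclp_into_rtranclp[of red X X'] r by blast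
next
  assume "conv X"
  then obtain V where "reds X V" "is_value V" unfolding conv_def by blast
  then show "conv X'"
  proof (cases rule: converse_rtranclpE)
    case base then show ?thesis using r \<open>is_value V\<close> value_nored by blast
  next
    case (step Y) then show ?thesis using r red_det \<open>is_value V\<close> unfolding conv_def by blast
  qed
qed

text \<open>Simulation arguments are by induction on the derivation of a big-step evaluation;
  the following natural semantics is equivalent to reduction to a value.\<close>
inductive bs :: "trm \<Rightarrow> trm \<Rightarrow> bool" where
  bsLam: "bs (Lam M) (Lam M)"
| bsApp: "bs M (Lam B) \<Longrightarrow> bs N V \<Longrightarrow> bs (subst B 0 V) W \<Longrightarrow> bs (App M N) W"

lemma bs_value: "bs M W \<Longrightarrow> \<exists>B. W = Lam B"
  by (induction rule: bs.induct) auto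

lemma bs_is_value: "bs M W \<Longrightarrow> is_value W"
  using bs_value is_value_def by blast

lemma bs_Lam: "bs (Lam X) Y \<Longrightarrow> Y = Lam X"
  by (cases rule: bs.cases) auto

lemma bs_reds: "bs M W \<Longrightarrow> reds M W"
proof (induction rule: bs.induct)
  case (bsLam M) then show ?case by simp
next
  case (bsApp M B N V W)
  have v: "is_value V" using bs_is_value[OF bsApp(2)] .
  have "reds (App M N) (App M V)" using reds_appR[OF bsApp(5)] .
  also have "reds (App M V) (App (Lam B) V)" using reds_appL[OF bsApp(4) v] .
  also have "red (App (Lam B) V) (subst B 0 V)" using red.beta[OF v] .
  also have "reds (subst B 0 V) W" by fact
  finally show ?case .
qed

lemma red_bs: "red M M' \<Longrightarrow> bs M' W \<Longrightarrow> bs M W"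
proof (induction arbitrary: W rule: red.induct)
  case (appR N N' M)
  from appR.prems show ?case
    by (cases rule: bs.cases) (auto intro: bs.bsApp appR.IH)
next
  case (appL M M' V)
  from appL.prems show ?case
  proof (cases rule: bs.cases)
    case (bsApp B V0)
    obtain X where V: "V = Lam X" using appL(2) by (auto simp: is_value_def)
    have "V0 = V" using bsApp(2) V bs_Lam by blast
    then show ?thesis using bsApp by (auto intro: bs.bsApp appL.IH)
  qed
next
  case (beta V P)
  obtain X where V: "V = Lam X" using beta(1) by (auto simp: is_value_def)
  show ?case by (rule bs.bsApp[OF bs.bsLam _ beta(2)]) (simp add: V bs.bsLam)
qed

lemma reds_bs: "reds M V \<Longrightarrow> is_value V \<Longrightarrow> bs M V"
proof (induction rule: converse_rtranclp_induct)
  case base then show ?case by (auto simp: is_value_def intro: bs.bsLam)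
next
  case (step y z) then show ?case using red_bs by blast
qed

lemma conv_bs: "conv M \<longleftrightarrow> (\<exists>W. bs M W)"
  unfolding conv_def using bs_reds reds_bs bs_is_value by blast

lemma bs_closed: "bs M W \<Longrightarrow> closed M \<Longrightarrow> closed W"
proof (induction rule: bs.induct)
  case (bsApp M B N V W)
  then have "closed (Lam B)" "closed V" by (auto simp: closed_def)
  then show ?case using bsApp closed_subst by blast
qed auto

lemma red_efill: "red M M' \<Longrightarrow> wf_ectx E \<Longrightarrow> red (efill E M) (efill E M')"
  by (induction E) (auto intro: red.intros)

lemma closed_efill: "wf_ectx E \<Longrightarrow> closed M \<Longrightarrow> closed (efill E M)"
  by (induction E) (auto simp: closed_def)

fun ecomp :: "ectx \<Rightarrow> ectx \<Rightarrow> ectx" where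
  "ecomp EHole F = F"
| "ecomp (EArg N E) F = EArg N (ecomp E F)"
| "ecomp (EFun E V) F = EFun (ecomp E F) V"

lemma efill_ecomp: "efill (ecomp E F) M = efill E (efill F M)"
  by (induction E) auto

lemma wf_ecomp: "wf_ectx E \<Longrightarrow> wf_ectx F \<Longrightarrow> wf_ectx (ecomp E F)"
  by (induction E) auto

lemma equiv_sym: "(M, N) \<in> ectx_equiv \<Longrightarrow> (N, M) \<in> ectx_equiv"
  unfolding ectx_equiv_def by blast

lemma equiv_trans: "(M, N) \<in> ectx_equiv \<Longrightarrow> (N, L) \<in> ectx_equiv \<Longrightarrow> (M, L) \<in> ectx_equiv"
  unfolding ectx_equiv_def by blast

lemma equiv_closed: "(M, N) \<in> ectx_equiv \<Longrightarrow> closed M \<and> closed N"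
  unfolding ectx_equiv_def by blast

lemma reds_equiv: "reds M M' \<Longrightarrow> closed M \<Longrightarrow> (M, M') \<in> ectx_equiv"
proof (induction rule: rtranclp_induct)
  case base then show ?case unfolding ectx_equiv_def by simp
next
  case (step y z)
  have "closed y" using step reds_closed by blast
  then have "(y, z) \<in> ectx_equiv"
    unfolding ectx_equiv_def using step(2) red_closed red_efill conv_red by blast
  then show ?case using step equiv_trans by blast
qed

lemma equiv_conv: "(M, N) \<in> ectx_equiv \<Longrightarrow> conv M \<Longrightarrow> conv N"
  unfolding ectx_equiv_def using wf_ectx.simps(1) efill.simps(1) by (auto simp del: wf_ectx.simps)

lemma equiv_appV:
  assumes "(M, N) \<in> ectx_equiv" "closed V" "is_value V"
  shows "(App M V, App N V) \<in> ectx_equiv"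
proof -
  have h: "\<forall>E. wf_ectx E \<longrightarrow> conv (efill E M) = conv (efill E N)" "closed M" "closed N"
    using assms(1) unfolding ectx_equiv_def by auto
  have "conv (efill E (App M V)) = conv (efill E (App N V))" if wf: "wf_ectx E" for E
  proof -
    have "wf_ectx (ecomp E (EFun EHole V))" using wf assms by (auto intro: wf_ecomp)
    then have "conv (efill (ecomp E (EFun EHole V)) M) = conv (efill (ecomp E (EFun EHole V)) N)"
      using h(1) by blast
    then show ?thesis unfolding efill_ecomp efill.simps .
  qed
  then show ?thesis using h assms unfolding ectx_equiv_def by (auto simp: closed_def)
qed

lemma lam_equiv_subst:
  assumes "(Lam M, Lam N) \<in> ectx_equiv" "closed W" "is_value W"
  shows "(subst M 0 W, subst N 0 W) \<in> ectx_equiv"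
proof -
  have "closed (Lam M)" "closed (Lam N)" using assms(1) equiv_closed by auto
  then have c: "closed (App (Lam M) W)" "closed (App (Lam N) W)"
    using assms(2) by (auto simp: closed_def)
  have "(App (Lam M) W, App (Lam N) W) \<in> ectx_equiv" using equiv_appV assms by blast
  moreover have "(App (Lam M) W, subst M 0 W) \<in> ectx_equiv" "(App (Lam N) W, subst N 0 W) \<in> ectx_equiv"
    using reds_equiv[OF r_into_rtranclp] red.beta[OF assms(3)] c by auto
  ultimately show ?thesis using equiv_sym equiv_trans by blast
qed

section \<open>Howe's method: the equivalence is a congruence\<close>

text \<open>The Howe relation of ectx_equiv (terms may be open): the compatible
  refinement of itself, composed on the right with the equivalence for closed terms.\<close>
inductive howe :: "trm \<Rightarrow> trm \<Rightarrow> bool" where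
  hvar: "howe (Var i) (Var i)"
| happ: "howe M1 N1 \<Longrightarrow> howe M2 N2 \<Longrightarrow> howe (App M1 M2) (App N1 N2)"
| hlam: "howe M N \<Longrightarrow> howe (Lam M) (Lam N)"
| hcomp: "closed M \<Longrightarrow> howe M N \<Longrightarrow> (N, N') \<in> ectx_equiv \<Longrightarrow> howe M N'"

lemma howe_refl: "howe M M"
  by (induction M) (auto intro: howe.hvar howe.happ howe.hlam)

lemma howe_equiv: "(M, N) \<in> ectx_equiv \<Longrightarrow> howe M N"
  using howe.hcomp[OF _ howe_refl] equiv_closed by blast

lemma howe_closedn: "howe M N \<Longrightarrow> closedn k M \<Longrightarrow> closedn k N"
proof (induction arbitrary: k rule: howe.induct)
  case (hcomp M N N')
  then show ?case using equiv_closed closed_closedn by blast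
qed auto

lemma howe_closed: "howe M N \<Longrightarrow> closed M \<Longrightarrow> closed N"
  unfolding closed_def using howe_closedn by blast

lemma howe_subst: "howe B B' \<Longrightarrow> howe V W \<Longrightarrow> howe (subst B k V) (subst B' k W)"
proof (induction arbitrary: k rule: howe.induct)
  case (hcomp M N N')
  have "closed N'" using hcomp(3) equiv_closed by blast
  then show ?case using howe.hcomp[OF hcomp(1,2,3)] hcomp(1) subst_closed_id by simp
qed (auto intro: howe.hvar howe.happ howe.hlam)

lemma howe_Lam_inv: "howe P Q \<Longrightarrow> P = Lam B \<Longrightarrow>
  \<exists>B1. howe B B1 \<and> (Q = Lam B1 \<or> (Lam B1, Q) \<in> ectx_equiv)"
proof (induction arbitrary: B rule: howe.induct)
  case (hcomp M N N')
  then obtain B1 where b: "howe B B1" "N = Lam B1 \<or> (Lam B1, N) \<in> ectx_equiv" by blast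
  then show ?case using hcomp(3) equiv_trans by blast
qed auto

lemma howe_App_inv: "howe P Q \<Longrightarrow> P = App P1 P2 \<Longrightarrow>
  \<exists>Q1 Q2. howe P1 Q1 \<and> howe P2 Q2 \<and> (Q = App Q1 Q2 \<or> (App Q1 Q2, Q) \<in> ectx_equiv)"
proof (induction arbitrary: P1 P2 rule: howe.induct)
  case (hcomp M N N')
  then obtain Q1 Q2 where
    "howe P1 Q1" "howe P2 Q2" "N = App Q1 Q2 \<or> (App Q1 Q2, N) \<in> ectx_equiv" by blast
  then show ?case using hcomp(3) equiv_trans by blast
qed auto

lemma howe_transfer:
  assumes "closed V" "howe V W" "bs Q0 W" "Q = Q0 \<or> (Q0, Q) \<in> ectx_equiv"
  shows "\<exists>W'. bs Q W' \<and> howe V W'"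
proof (cases "Q = Q0")
  case False
  then have e: "(Q0, Q) \<in> ectx_equiv" using assms(4) by blast
  then have c: "closed Q0" "closed Q" using equiv_closed by auto
  have "conv Q" using assms(3) e equiv_conv conv_bs by blast
  then obtain W' where w': "bs Q W'" using conv_bs by blast
  have "(W, Q0) \<in> ectx_equiv" using reds_equiv[OF bs_reds[OF assms(3)] c(1)] equiv_sym by blast
  moreover have "(Q, W') \<in> ectx_equiv" using reds_equiv[OF bs_reds[OF w'] c(2)] .
  ultimately have "(W, W') \<in> ectx_equiv" using e equiv_trans by blast
  then show ?thesis using howe.hcomp[OF assms(1,2)] w' by blast
qed (use assms in blast)

lemma howe_beta:
  assumes "howe (Lam B) (Lam B')" "howe V W" "closed (Lam B)" "closed V"
    "closed W" "is_value W"
  shows "howe (subst B 0 V) (subst B' 0 W)"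
proof -
  obtain B1 where b1: "howe B B1" "Lam B' = Lam B1 \<or> (Lam B1, Lam B') \<in> ectx_equiv"
    using howe_Lam_inv[OF assms(1)] by blast
  have hs: "howe (subst B 0 V) (subst B1 0 W)" using howe_subst[OF b1(1) assms(2)] .
  show ?thesis
  proof (cases "B' = B1")
    case False
    then have "(subst B1 0 W, subst B' 0 W) \<in> ectx_equiv"
      using b1(2) lam_equiv_subst assms(5,6) by simp
    then show ?thesis using howe.hcomp[OF closed_subst[OF assms(3,4)] hs] by blast
  qed (use hs in simp)
qed

lemma howe_simulation: "bs P V \<Longrightarrow> closed P \<Longrightarrow> howe P Q \<Longrightarrow> \<exists>W. bs Q W \<and> howe V W"
proof (induction arbitrary: Q rule: bs.induct)
  case (bsLam M)
  obtain B1 where b: "howe M B1" "Q = Lam B1 \<or> (Lam B1, Q) \<in> ectx_equiv"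
    using howe_Lam_inv[OF bsLam(2)] by blast
  show ?case using howe_transfer[OF bsLam(1) howe.hlam[OF b(1)] bs.bsLam b(2)] .
next
  case (bsApp M B N V W)
  have cM: "closed M" and cN: "closed N" using bsApp(7) by (auto simp: closed_def)
  obtain Q1 Q2 where q: "howe M Q1" "howe N Q2" "Q = App Q1 Q2 \<or> (App Q1 Q2, Q) \<in> ectx_equiv"
    using howe_App_inv[OF bsApp(8)] by blast
  obtain F where f: "bs Q1 F" "howe (Lam B) F" using bsApp(4)[OF cM q(1)] by blast
  obtain W2 where w2: "bs Q2 W2" "howe V W2" using bsApp(5)[OF cN q(2)] by blast
  obtain B' where F: "F = Lam B'" using bs_value[OF f(1)] by blast
  have cLB: "closed (Lam B)" using bs_closed[OF bsApp(1) cM] .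
  have cV: "closed V" using bs_closed[OF bsApp(2) cN] .
  have cs: "closed (subst B 0 V)" using closed_subst[OF cLB cV] .
  have "howe (subst B 0 V) (subst B' 0 W2)"
    using howe_beta[OF f(2)[unfolded F] w2(2) cLB cV howe_closed[OF w2(2) cV] bs_is_value[OF w2(1)]] .
  then obtain W' where w': "bs (subst B' 0 W2) W'" "howe W W'" using bsApp(6)[OF cs] by blast
  have "bs (App Q1 Q2) W'" using bs.bsApp[OF f(1)[unfolded F] w2(1) w'(1)] .
  then show ?case using howe_transfer[OF bs_closed[OF bsApp(3) cs] w'(2) _ q(3)] by blast
qed

lemma howe_conv: "howe P Q \<Longrightarrow> closed P \<Longrightarrow> conv P \<Longrightarrow> conv Q"
  using howe_simulation conv_bs by blast

lemma howe_fill: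
  assumes "length Ms = nholes C" "length Ns = nholes C"
    "\<forall>i < nholes C. (Ms ! i, Ns ! i) \<in> ectx_equiv"
  shows "howe (fill C Ms) (fill C Ns)"
  using assms
proof (induction C arbitrary: Ms Ns)
  case CHole
  then have "(hd Ms, hd Ns) \<in> ectx_equiv"
    by (metis One_nat_def hd_conv_nth length_0_conv less_one nholes.simps(2) zero_neq_one)
  then show ?case by (simp add: howe_equiv)
next
  case (CApp C1 C2)
  let ?n = "nholes C1"
  have "howe (fill C1 (take ?n Ms)) (fill C1 (take ?n Ns))"
    using CApp.IH(1)[of "take ?n Ms" "take ?n Ns"] CApp.prems by auto
  moreover have "howe (fill C2 (drop ?n Ms)) (fill C2 (drop ?n Ns))"
  proof (rule CApp.IH(2))
    show "\<forall>i<nholes C2. (drop ?n Ms ! i, drop ?n Ns ! i) \<in> ectx_equiv"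
      using CApp.prems by (auto simp: add.commute)
  qed (use CApp.prems in auto)
  ultimately show ?case using howe.happ by simp
qed (auto intro: howe.hvar howe.happ howe.hlam)

text \<open>The evaluation-context equivalence is a congruence, hence implies contextual
  equivalence.\<close>
lemma ectx_sub_ctx: "ectx_equiv \<subseteq> ctx_equiv"
proof (clarify)
  fix M N assume mn: "(M, N) \<in> ectx_equiv"
  have "howe (fill_all C M) (fill_all C N)" "howe (fill_all C N) (fill_all C M)" for C
    using mn equiv_sym unfolding fill_all_def by (auto intro!: howe_fill)
  then show "(M, N) \<in> ctx_equiv"
    using mn equiv_closed howe_conv unfolding ctx_equiv_def by blast
qed

fun ctx_of :: "trm \<Rightarrow> ctx" where
  "ctx_of (Var i) = CVar i"
| "ctx_of (App M N) = CApp (ctx_of M) (ctx_of N)"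
| "ctx_of (Lam M) = CLam (ctx_of M)"

lemma nholes_ctx_of[simp]: "nholes (ctx_of t) = 0"
  by (induction t) auto

lemma fill_ctx_of[simp]: "fill (ctx_of t) Ms = t"
  by (induction t arbitrary: Ms) auto

fun ctx_of_ectx :: "ectx \<Rightarrow> ctx" where
  "ctx_of_ectx EHole = CHole"
| "ctx_of_ectx (EArg N E) = CApp (ctx_of N) (ctx_of_ectx E)"
| "ctx_of_ectx (EFun E V) = CApp (ctx_of_ectx E) (ctx_of V)"

lemma nholes_ctx_of_ectx[simp]: "nholes (ctx_of_ectx E) = 1"
  by (induction E) auto

lemma fill_all_ctx_of_ectx: "fill_all (ctx_of_ectx E) M = efill E M"
proof -
  have "fill (ctx_of_ectx E) [M] = efill E M" by (induction E) auto
  then show ?thesis unfolding fill_all_def by simp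
qed

lemma ctx_sub_ectx: "ctx_equiv \<subseteq> ectx_equiv"
proof (clarify)
  fix M N assume mn: "(M, N) \<in> ctx_equiv"
  then have c: "closed M" "closed N" unfolding ctx_equiv_def by auto
  have "conv (efill E M) \<longleftrightarrow> conv (efill E N)" if "wf_ectx E" for E
  proof -
    have "closed (fill_all (ctx_of_ectx E) M)" "closed (fill_all (ctx_of_ectx E) N)"
      using closed_efill that c by (auto simp: fill_all_ctx_of_ectx)
    then have "conv (fill_all (ctx_of_ectx E) M) \<longleftrightarrow> conv (fill_all (ctx_of_ectx E) N)"
      using mn unfolding ctx_equiv_def by blast
    then show ?thesis by (simp add: fill_all_ctx_of_ectx)
  qed
  then show "(M, N) \<in> ectx_equiv" using c unfolding ectx_equiv_def by blast
qed

lemma ctx_eq: "ctx_equiv = ectx_equiv"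
  using ctx_sub_ectx ectx_sub_ctx by blast

section \<open>Soundness of coupled logical bisimulations\<close>

inductive open_closure :: "(trm \<times> trm) set \<Rightarrow> trm \<Rightarrow> trm \<Rightarrow> bool" for R where
  oleaf: "(M, N) \<in> R \<Longrightarrow> open_closure R M N"
| ovar: "open_closure R (Var i) (Var i)"
| oapp: "open_closure R M1 N1 \<Longrightarrow> open_closure R M2 N2 \<Longrightarrow> open_closure R (App M1 M2) (App N1 N2)"
| olam: "open_closure R M N \<Longrightarrow> open_closure R (Lam M) (Lam N)"

text \<open>The candidate relation for soundness: R2 closed under application, plus
  abstractions whose bodies are related by the context closure of R1.\<close>
inductive clb_closure :: "(trm \<times> trm) set \<Rightarrow> (trm \<times> trm) set \<Rightarrow> trm \<Rightarrow> trm \<Rightarrow> bool"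
  for R1 R2 where
  cleaf: "(M, N) \<in> R2 \<Longrightarrow> clb_closure R1 R2 M N"
| capp: "clb_closure R1 R2 M1 N1 \<Longrightarrow> clb_closure R1 R2 M2 N2 \<Longrightarrow>
    clb_closure R1 R2 (App M1 M2) (App N1 N2)"
| clam: "open_closure R1 M N \<Longrightarrow> clb_closure R1 R2 (Lam M) (Lam N)"

lemma open_closure_refl: "open_closure R M M"
  by (induction M) (auto intro: open_closure.intros)

lemma closed_relD: "(M, N) \<in> R \<Longrightarrow> R \<subseteq> closed_rel \<Longrightarrow> closed M \<and> closed N"
  unfolding closed_rel_def by blast

lemma open_closure_closedn:
  "open_closure R M N \<Longrightarrow> R \<subseteq> closed_rel \<Longrightarrow> closedn k M \<Longrightarrow> closedn k N"
proof (induction arbitrary: k rule: open_closure.induct)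
  case (oleaf M N)
  then show ?case using closed_relD closed_closedn by blast
qed auto

lemma clb_closure_closed:
  "clb_closure R1 R2 M N \<Longrightarrow> R1 \<subseteq> closed_rel \<Longrightarrow> R2 \<subseteq> closed_rel \<Longrightarrow> closed M \<Longrightarrow> closed N"
proof (induction rule: clb_closure.induct)
  case (cleaf M N)
  then show ?case using closed_relD by blast
next
  case (clam M N)
  then show ?case using open_closure_closedn unfolding closed_def by fastforce
qed (auto simp: closed_def)

lemma open_closure_subst: "open_closure R B B' \<Longrightarrow> R \<subseteq> closed_rel \<Longrightarrow> open_closure R V W \<Longrightarrow>
  open_closure R (subst B k V) (subst B' k W)"
proof (induction arbitrary: k rule: open_closure.induct)
  case (oleaf M N)
  then show ?case using open_closure.oleaf subst_closed_id closed_relD by metis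
qed (auto intro: open_closure.intros)

lemma open_closure_clb_closure:
  "open_closure R1 M N \<Longrightarrow> R1 \<subseteq> R2 \<Longrightarrow> closed M \<Longrightarrow> clb_closure R1 R2 M N"
  by (induction rule: open_closure.induct) (auto simp: closed_def intro: clb_closure.intros)

text \<open>On closed terms the open context closure is the context closure
  ctx_closure of the definition.\<close>
lemma open_closure_fill: "open_closure R M N \<Longrightarrow> \<exists>C Ms Ns. M = fill C Ms \<and> N = fill C Ns \<and>
   length Ms = nholes C \<and> length Ns = nholes C \<and> (\<forall>i < nholes C. (Ms ! i, Ns ! i) \<in> R)"
proof (induction rule: open_closure.induct)
  case (oleaf M N)
  show ?case by (rule exI[of _ CHole], rule exI[of _ "[M]"], rule exI[of _ "[N]"]) (simp add: oleaf)
next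
  case (ovar i)
  show ?case by (rule exI[of _ "CVar i"]) simp
next
  case (oapp M1 N1 M2 N2)
  then obtain C1 Ms1 Ns1 C2 Ms2 Ns2 where
    a: "M1 = fill C1 Ms1" "N1 = fill C1 Ns1" "length Ms1 = nholes C1" "length Ns1 = nholes C1"
       "\<forall>i < nholes C1. (Ms1 ! i, Ns1 ! i) \<in> R" and
    b: "M2 = fill C2 Ms2" "N2 = fill C2 Ns2" "length Ms2 = nholes C2" "length Ns2 = nholes C2"
       "\<forall>i < nholes C2. (Ms2 ! i, Ns2 ! i) \<in> R" by blast
  have "\<forall>i < nholes (CApp C1 C2). ((Ms1 @ Ms2) ! i, (Ns1 @ Ns2) ! i) \<in> R"
    using a b by (auto simp: nth_append)
  then show ?case using a b
    by (intro exI[of _ "CApp C1 C2"] exI[of _ "Ms1 @ Ms2"] exI[of _ "Ns1 @ Ns2"]) simp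
next
  case (olam M N)
  then show ?case by (metis fill.simps(4) nholes.simps(4))
qed

lemma open_closure_ctx_closure:
  "open_closure R M N \<Longrightarrow> closed M \<Longrightarrow> closed N \<Longrightarrow> (M, N) \<in> ctx_closure R"
  using open_closure_fill unfolding ctx_closure_def by fastforce

lemma cbv_clbD:
  assumes "cbv_clb R1 R2"
  shows "clb_progress R1 R2" "R1 \<subseteq> R2" "R1 \<subseteq> closed_rel" "R2 \<subseteq> closed_rel"
  using assms unfolding cbv_clb_def by auto

lemma progress_reds: "reds M M' \<Longrightarrow> clb_progress R1 R2 \<Longrightarrow> (M, N) \<in> R2 \<Longrightarrow>
  \<exists>N'. reds N N' \<and> (M', N') \<in> R2"
proof (induction rule: rtranclp_induct)
  case (step y z)
  then obtain N1 where n1: "reds N N1" "(y, N1) \<in> R2" by blast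
  then obtain N2 where "reds N1 N2" "(z, N2) \<in> R2"
    using step(2,4) unfolding clb_progress_def by blast
  then show ?case using n1 by (meson rtranclp_trans)
qed blast

lemma progress_bs: "clb_progress R1 R2 \<Longrightarrow> (P, Q) \<in> R2 \<Longrightarrow> bs P V \<Longrightarrow>
  \<exists>W. bs Q W \<and> (V, W) \<in> R1"
proof -
  assume pr: "clb_progress R1 R2" and pq: "(P, Q) \<in> R2" and b: "bs P V"
  obtain Q' where q': "reds Q Q'" "(V, Q') \<in> R2" using progress_reds[OF bs_reds[OF b] pr pq] by blast
  obtain M' where V: "V = Lam M'" using bs_value[OF b] by blast
  obtain N' where n: "reds Q' (Lam N')" "(V, Lam N') \<in> R1"
    using pr q'(2) V unfolding clb_progress_def by blast
  have "reds Q (Lam N')" using q'(1) n(1) by (meson rtranclp_trans)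
  then show ?thesis using n(2) reds_bs by (auto simp: is_value_def)
qed

lemma clb_closure_beta:
  assumes clb: "cbv_clb R1 R2"
    and lam: "open_closure R1 (Lam B) (Lam B')" and v: "open_closure R1 V W"
    and c: "closed (Lam B)" "closed V" "closed W" and vals: "is_value V" "is_value W"
  shows "clb_closure R1 R2 (subst B 0 V) (subst B' 0 W)"
  using lam
proof (cases rule: open_closure.cases)
  case oleaf
  obtain N' where n: "reds (Lam B') (Lam N')"
    "\<forall>P Q. is_value P \<and> is_value Q \<and> (P, Q) \<in> ctx_closure R1 \<longrightarrow> (subst B 0 P, subst N' 0 Q) \<in> R2"
    using cbv_clbD(1,2)[OF clb] oleaf unfolding clb_progress_def by blast
  have "N' = B'" using reds_value_eq[OF n(1)] by (simp add: is_value_def)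
  then show ?thesis
    using n(2) open_closure_ctx_closure[OF v c(2,3)] vals by (blast intro: clb_closure.cleaf)
next
  case olam
  then show ?thesis using open_closure_subst[OF olam cbv_clbD(3)[OF clb] v]
      open_closure_clb_closure cbv_clbD(2)[OF clb] closed_subst[OF c(1,2)] by blast
qed

lemma clb_closure_simulation:
  assumes clb: "cbv_clb R1 R2"
  shows "bs P V \<Longrightarrow> closed P \<Longrightarrow> clb_closure R1 R2 P Q \<Longrightarrow> \<exists>W. bs Q W \<and> open_closure R1 V W"
proof (induction arbitrary: Q rule: bs.induct)
  note pr = cbv_clbD(1)[OF clb]
  case (bsLam M)
  from bsLam(2) show ?case
  proof (cases rule: clb_closure.cases)
    case cleaf
    then show ?thesis using progress_bs[OF pr _ bs.bsLam] open_closure.oleaf by blast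
  next
    case (clam N)
    then show ?thesis using open_closure.olam bs.bsLam by blast
  qed
next
  note pr = cbv_clbD(1)[OF clb]
  case (bsApp M B N V W)
  have cM: "closed M" and cN: "closed N" using bsApp(7) by (auto simp: closed_def)
  from bsApp(8) show ?case
  proof (cases rule: clb_closure.cases)
    case cleaf
    then show ?thesis using progress_bs[OF pr _ bs.bsApp[OF bsApp(1,2,3)]] open_closure.oleaf by blast
  next
    case (capp Q1 Q2)
    obtain F where f: "bs Q1 F" "open_closure R1 (Lam B) F" using bsApp(4)[OF cM capp(2)] by blast
    obtain W2 where w2: "bs Q2 W2" "open_closure R1 V W2" using bsApp(5)[OF cN capp(3)] by blast
    obtain B' where F: "F = Lam B'" using bs_value[OF f(1)] by blast
    have cLB: "closed (Lam B)" using bs_closed[OF bsApp(1) cM] .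
    have cV: "closed V" using bs_closed[OF bsApp(2) cN] .
    have cW2: "closed W2"
      using bs_closed[OF w2(1) clb_closure_closed[OF capp(3) cbv_clbD(3,4)[OF clb] cN]] .
    have cs: "closed (subst B 0 V)" using closed_subst[OF cLB cV] .
    have "clb_closure R1 R2 (subst B 0 V) (subst B' 0 W2)"
      using clb_closure_beta[OF clb f(2)[unfolded F] w2(2) cLB cV cW2
          bs_is_value[OF bsApp(2)] bs_is_value[OF w2(1)]] .
    then obtain W' where w': "bs (subst B' 0 W2) W'" "open_closure R1 W W'"
      using bsApp(6)[OF cs] by blast
    have "bs Q W'" using bs.bsApp[OF f(1)[unfolded F] w2(1) w'(1)] capp(1) by simp
    then show ?thesis using w'(2) by blast
  qed
qed

lemma clb_closure_efill:
  "(M, N) \<in> R2 \<Longrightarrow> R1 \<subseteq> R2 \<Longrightarrow> wf_ectx E \<Longrightarrow> clb_closure R1 R2 (efill E M) (efill E N)"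
  by (induction E)
    (auto intro: clb_closure.intros open_closure_clb_closure[OF open_closure_refl])

lemma clb_converse: "cbv_clb R1 R2 \<Longrightarrow> cbv_clb (R1\<inverse>) (R2\<inverse>)"
  unfolding cbv_clb_def closed_rel_def by auto

lemma clb_conv:
  assumes clb: "cbv_clb R1 R2" and mn: "(M, N) \<in> R2" and E: "wf_ectx E"
    and cv: "conv (efill E M)"
  shows "conv (efill E N)"
  using clb_closure_simulation[OF clb _ _ clb_closure_efill[OF mn cbv_clbD(2)[OF clb] E]] cv
    closed_efill[OF E] closed_relD[OF mn cbv_clbD(4)[OF clb]] conv_bs by metis

lemma clb_sound: "cbv_clb R1 R2 \<Longrightarrow> R2 \<subseteq> ectx_equiv"
  unfolding ectx_equiv_def
  using clb_conv clb_conv[OF clb_converse] closed_relD cbv_clbD(4) by fast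

section \<open>Completeness: the equivalence is a coupled logical bisimulation\<close>

lemma howe_efill: "howe M N \<Longrightarrow> wf_ectx E \<Longrightarrow> howe (efill E M) (efill E N)"
  by (induction E) (auto intro: howe.happ howe_refl)

lemma howe_both_equiv:
  "closed P \<Longrightarrow> closed Q \<Longrightarrow> howe P Q \<Longrightarrow> howe Q P \<Longrightarrow> (P, Q) \<in> ectx_equiv"
  unfolding ectx_equiv_def using howe_conv howe_efill closed_efill by blast

lemma ctx_closure_howe: "(P, Q) \<in> ctx_closure ectx_equiv \<Longrightarrow> howe P Q \<and> howe Q P"
  unfolding ctx_closure_def using howe_fill equiv_sym by blast

lemma equiv_subst_ctx_closure:
  assumes e: "(Lam M, Lam N) \<in> ectx_equiv" and vals: "is_value P" "is_value Q"
    and pq: "(P, Q) \<in> ctx_closure ectx_equiv"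
  shows "(subst M 0 P, subst N 0 Q) \<in> ectx_equiv"
proof -
  have cl: "closed (Lam M)" "closed (Lam N)" using e equiv_closed by auto
  have cp: "closed P" "closed Q" using pq unfolding ctx_closure_def by auto
  have h: "howe P Q" "howe Q P" using ctx_closure_howe[OF pq] by auto
  have c: "closed (subst M 0 P)" "closed (subst N 0 Q)" using closed_subst cl cp by auto
  have "(subst M 0 Q, subst N 0 Q) \<in> ectx_equiv" "(subst N 0 P, subst M 0 P) \<in> ectx_equiv"
    using lam_equiv_subst[OF e] lam_equiv_subst[OF equiv_sym[OF e]] cp vals by auto
  moreover have "howe (subst M 0 P) (subst M 0 Q)" "howe (subst N 0 Q) (subst N 0 P)"
    using howe_subst[OF howe_refl h(1)] howe_subst[OF howe_refl h(2)] by auto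
  ultimately have "howe (subst M 0 P) (subst N 0 Q)" "howe (subst N 0 Q) (subst M 0 P)"
    using howe.hcomp c by blast+
  then show ?thesis using howe_both_equiv c by blast
qed

lemma equiv_progress: "clb_progress ectx_equiv ectx_equiv"
  unfolding clb_progress_def
proof (intro allI impI conjI)
  fix M N M' assume mn: "(M, N) \<in> ectx_equiv" and r: "red M M'"
  have "(M', M) \<in> ectx_equiv"
    using reds_equiv[OF r_into_rtranclp[where r = red, OF r]] mn equiv_closed equiv_sym by blast
  then show "\<exists>N'. reds N N' \<and> (M', N') \<in> ectx_equiv" using mn equiv_trans by blast
next
  fix M N M' assume mn: "(M, N) \<in> ectx_equiv" and m: "M = Lam M'"
  have "conv N" using mn m equiv_conv unfolding conv_def is_value_def by blast
  then obtain N' where v: "reds N (Lam N')" unfolding conv_def is_value_def by blast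
  then have "(Lam M', Lam N') \<in> ectx_equiv"
    using mn m reds_equiv equiv_closed equiv_trans by blast
  then show "\<exists>N'. reds N (Lam N') \<and> (Lam M', Lam N') \<in> ectx_equiv \<and>
          (\<forall>P Q. is_value P \<and> is_value Q \<and> (P, Q) \<in> ctx_closure ectx_equiv \<longrightarrow>
                 (subst M' 0 P, subst N' 0 Q) \<in> ectx_equiv)"
    using v equiv_subst_ctx_closure by blast
qed

text \<open>Since the equivalence is symmetric and equals ctx_equiv, both directions of
  the definition are covered by equiv_progress.\<close>
lemma equiv_clb: "cbv_clb ctx_equiv ectx_equiv"
proof -
  have "ectx_equiv\<inverse> = ectx_equiv" using equiv_sym by auto
  moreover have "ectx_equiv \<subseteq> closed_rel" unfolding closed_rel_def using equiv_closed by auto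
  ultimately show ?thesis unfolding cbv_clb_def ctx_eq using equiv_progress by simp
qed

theorem mainTheorem17:
  shows "bisim1 = ctx_equiv \<and> bisim2 = ectx_equiv \<and> cbv_clb ctx_equiv ectx_equiv \<and>
         ctx_equiv = ectx_equiv"
proof -
  have "bisim1 = ctx_equiv"
    unfolding bisim1_def ctx_eq using clb_sound equiv_clb[unfolded ctx_eq] cbv_clb_def by blast
  moreover have "bisim2 = ectx_equiv"
    unfolding bisim2_def using clb_sound equiv_clb by blast
  ultimately show ?thesis using equiv_clb ctx_eq by blast
qed

end
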